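(* Let $\mathcal{H}$ be a real or complex Hilbert space and let $S:\mathcal{H}\to\mathcal{H}$ be a (not necessarily densely defined) linear operator such that $\operatorname{ran}(S\cap S^* )=\mathcal{H}$. Then $S$ is densely defined and self-adjoint.
   Context: Operators are identified with their graphs. For a linear relation $R\subset\mathcal{H}\times\mathcal{H}$ its adjoint is the linear relation $R^*=\{(k',h'):\langle k,k'\rangle=\langle h,h'\rangle\ \forall (h,k)\in R\}$ (possibly multivalued when $R$ is not densely defined). $S\cap S^*$ is the intersection of the graph of $S$ with $S^*$, and $\operatorname{ran}$ denotes its range (set of second coordinates). *)

theory Defs
  imports "HOL-Analysis.Analysis"
begin

class complex_vector_space = real_vector +
  fixes scaleC :: "complex \<Rightarrow> 'a \<Rightarrow> 'a"
  assumes scaleC_add_right: "scaleC a (x + y) = scaleC a x + scaleC a y"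
    and scaleC_add_left: "scaleC (a + b) x = scaleC a x + scaleC b x"
    and scaleC_scaleC: "scaleC a (scaleC b x) = scaleC (a * b) x"
    and scaleC_one: "scaleC 1 x = x"
    and scaleR_scaleC: "scaleR r x = scaleC (complex_of_real r) x"

class complex_inner_space = complex_vector_space + real_normed_vector +
  fixes cinner :: "'a \<Rightarrow> 'a \<Rightarrow> complex"
  assumes cinner_commute: "cinner x y = cnj (cinner y x)"
    and cinner_add_left: "cinner (x + y) z = cinner x z + cinner y z"
    and cinner_scaleC_left: "cinner (scaleC r x) y = cnj r * cinner x y"
    and cinner_self_norm: "cinner x x = complex_of_real ((norm x)\<^sup>2)"

text \<open>A (not necessarily densely defined) linear operator, identified with its graph:
  a linear subspace of H x H that is single-valued.\<close>

definition real_linear_operator :: "('a::real_vector \<times> 'a) set \<Rightarrow> bool" where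
  "real_linear_operator S \<longleftrightarrow>
     (0, 0) \<in> S \<and>
     (\<forall>x y u v. (x, y) \<in> S \<longrightarrow> (u, v) \<in> S \<longrightarrow> (x + u, y + v) \<in> S) \<and>
     (\<forall>c x y. (x, y) \<in> S \<longrightarrow> (scaleR c x, scaleR c y) \<in> S) \<and>
     (\<forall>x y z. (x, y) \<in> S \<longrightarrow> (x, z) \<in> S \<longrightarrow> y = z)"

definition complex_linear_operator :: "('a::complex_vector_space \<times> 'a) set \<Rightarrow> bool" where
  "complex_linear_operator S \<longleftrightarrow>
     (0, 0) \<in> S \<and>
     (\<forall>x y u v. (x, y) \<in> S \<longrightarrow> (u, v) \<in> S \<longrightarrow> (x + u, y + v) \<in> S) \<and>
     (\<forall>c x y. (x, y) \<in> S \<longrightarrow> (scaleC c x, scaleC c y) \<in> S) \<and>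
     (\<forall>x y z. (x, y) \<in> S \<longrightarrow> (x, z) \<in> S \<longrightarrow> y = z)"

definition real_adjoint :: "('a::real_inner \<times> 'a) set \<Rightarrow> ('a \<times> 'a) set" where
  "real_adjoint R = {(k', h'). \<forall>(h, k) \<in> R. inner k k' = inner h h'}"

definition complex_adjoint :: "('a::complex_inner_space \<times> 'a) set \<Rightarrow> ('a \<times> 'a) set" where
  "complex_adjoint R = {(k', h'). \<forall>(h, k) \<in> R. cinner k k' = cinner h h'}"

end

theory Submission
  imports Defs
begin

text \<open>Let T = S \<inter> S*, so ran T = H. If (x, y) \<in> S, pick (u, y) \<in> T; then (x - u, 0) \<in> S
  while x - u \<in> ran S*, and ker S \<perp> ran S* forces x = u, so S \<subseteq> S*. If (k, h) \<in> S*, pick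
  (u, h) \<in> T; then (k - u, 0) \<in> S*, and ker S* \<perp> ran S = H forces k = u, so S* \<subseteq> S.
  Now S* = S is single-valued, i.e. dom S has trivial orthogonal complement, hence is dense by
  the projection theorem (nearest points in complete convex sets, via the parallelogram law).
  Everything is done for an abstract real inner product; the complex case uses Re \<langle>x, y\<rangle>,
  which yields the same adjoint because a complex-linear S is invariant under multiplication
  by \<i>.\<close>

lemma zero_if_linear_le_quadratic:
  fixes c q :: real
  assumes "\<And>t. 2 * t * c \<le> t\<^sup>2 * q"
  shows "c = 0"
proof -
  define a where "a = \<bar>q\<bar> + 1"
  have a: "a > 0" "q < 2 * a" by (auto simp: a_def)
  have "2 * (c / a) * c \<le> (c / a)\<^sup>2 * q" by (rule assms)
  then have "2 * c * c * a \<le> c * c * q"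
    using a by (simp add: power2_eq_square field_simps)
  then have "c\<^sup>2 * (2 * a - q) \<le> 0" by (simp add: power2_eq_square algebra_simps)
  with a have "c\<^sup>2 \<le> 0" by (simp add: mult_le_0_iff)
  then show ?thesis by simp
qed

lemma real_linear_operator_diff:
  assumes "real_linear_operator S" "(x, y) \<in> S" "(u, v) \<in> S"
  shows "(x - u, y - v) \<in> S"
  using assms unfolding real_linear_operator_def
  by (metis (no_types) diff_conv_add_uminus scaleR_minus1_left)

lemma subspace_Domain:
  assumes "real_linear_operator S"
  shows "subspace (Domain S)"
  using assms unfolding real_linear_operator_def subspace_def by (meson Domain.simps)

locale real_inner_product =
  fixes inn :: "'a::real_normed_vector \<Rightarrow> 'a \<Rightarrow> real"
  assumes inn_commute: "inn x y = inn y x"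
    and inn_add_left: "inn (x + y) z = inn x z + inn y z"
    and inn_scaleR_left: "inn (r *\<^sub>R x) y = r * inn x y"
    and inn_self: "inn x x = (norm x)\<^sup>2"
begin

definition adjoint :: "('a \<times> 'a) set \<Rightarrow> ('a \<times> 'a) set" where
  "adjoint R = {(k', h'). \<forall>(h, k) \<in> R. inn k k' = inn h h'}"

lemma inn_add_right: "inn x (y + z) = inn x y + inn x z"
  by (simp add: inn_commute[of x] inn_add_left)

lemma inn_scaleR_right: "inn x (r *\<^sub>R y) = r * inn x y"
  by (simp add: inn_commute[of x] inn_scaleR_left)

lemma inn_zero_left [simp]: "inn 0 y = 0"
  using inn_scaleR_left[of 0 0 y] by simp

lemma inn_zero_right [simp]: "inn x 0 = 0"
  using inn_scaleR_right[of x 0 0] by simp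

lemma inn_diff_left: "inn (x - y) z = inn x z - inn y z"
  using inn_add_left[of "x - y" y z] by simp

lemma inn_diff_right: "inn x (y - z) = inn x y - inn x z"
  using inn_add_right[of x "y - z" z] by simp

lemma inn_eq_zero_iff [simp]: "inn x x = 0 \<longleftrightarrow> x = 0"
  by (simp add: inn_self)

lemma norm_diff_scaleR_sq:
  "(norm (x - t *\<^sub>R m))\<^sup>2 = (norm x)\<^sup>2 - 2 * t * inn m x + t\<^sup>2 * (norm m)\<^sup>2"
proof -
  have "inn (x - t *\<^sub>R m) (x - t *\<^sub>R m) = inn x x - 2 * t * inn m x + t\<^sup>2 * inn m m"
    by (simp add: inn_diff_left inn_diff_right inn_scaleR_left inn_scaleR_right
        inn_commute[of x m] power2_eq_square algebra_simps)
  then show ?thesis by (simp add: inn_self)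
qed

lemma parallelogram_law:
  fixes u v :: 'a
  shows "(norm (u + v))\<^sup>2 + (norm (u - v))\<^sup>2 = 2 * (norm u)\<^sup>2 + 2 * (norm v)\<^sup>2"
proof -
  have "inn (u + v) (u + v) + inn (u - v) (u - v) = 2 * inn u u + 2 * inn v v"
    by (simp add: inn_diff_left inn_diff_right inn_add_left inn_add_right inn_commute[of v u])
  then show ?thesis by (simp add: inn_self)
qed

lemma dist_sq_le_in_convex:
  fixes C :: "'a set"
  assumes "convex C" "a \<in> C" "b \<in> C"
  shows "(dist a b)\<^sup>2 \<le> 2 * (dist y a)\<^sup>2 + 2 * (dist y b)\<^sup>2 - 4 * (infdist y C)\<^sup>2"
proof -
  have "midpoint a b \<in> C"
    using convexD[OF assms, of "1/2" "1/2"] by (simp add: midpoint_def scaleR_add_right)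
  then have "infdist y C \<le> dist y (midpoint a b)" by (rule infdist_le)
  also have "dist y (midpoint a b) = norm ((y - a) + (y - b)) / 2"
  proof -
    have "(y - a) + (y - b) = 2 *\<^sub>R (y - midpoint a b)"
      by (simp add: midpoint_def algebra_simps scaleR_2)
    then show ?thesis by (simp add: dist_norm)
  qed
  finally have "4 * (infdist y C)\<^sup>2 \<le> (norm ((y - a) + (y - b)))\<^sup>2"
    using infdist_nonneg[of y C] power_mono[of "2 * infdist y C" _ 2] by (simp add: power_mult_distrib)
  moreover have "(norm ((y - a) - (y - b)))\<^sup>2 = (dist a b)\<^sup>2"
    by (simp add: dist_norm norm_minus_commute)
  ultimately show ?thesis
    using parallelogram_law[of "y - a" "y - b"] by (simp add: dist_norm)
qed

lemma Cauchy_if_dist_tendsto_infdist: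
  fixes C :: "'a set"
  assumes C: "convex C" and f: "\<And>n. f n \<in> C"
    and lim: "(\<lambda>n. dist y (f n)) \<longlonglongrightarrow> infdist y C"
  shows "Cauchy f"
  unfolding Cauchy_def
proof (intro allI impI)
  fix e :: real
  assume e: "e > 0"
  define excess where "excess n = (dist y (f n))\<^sup>2 - (infdist y C)\<^sup>2" for n
  have "excess \<longlonglongrightarrow> (infdist y C)\<^sup>2 - (infdist y C)\<^sup>2"
    unfolding excess_def by (intro tendsto_intros lim)
  then have "\<forall>\<^sub>F n in sequentially. excess n < e\<^sup>2 / 4"
    by (rule order_tendstoD) (use e in simp)
  then obtain N where N: "\<And>n. n \<ge> N \<Longrightarrow> excess n < e\<^sup>2 / 4"
    by (auto simp: eventually_sequentially)
  have "dist (f m) (f n) < e" if "m \<ge> N" "n \<ge> N" for m n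
  proof -
    have "(dist (f m) (f n))\<^sup>2 \<le> 2 * excess m + 2 * excess n"
      using dist_sq_le_in_convex[OF C f f, of m n y] unfolding excess_def by (simp add: algebra_simps)
    also have "\<dots> < e\<^sup>2" using N[OF that(1)] N[OF that(2)] by linarith
    finally show ?thesis by (rule power_less_imp_less_base) (use e in simp)
  qed
  then show "\<exists>M. \<forall>m\<ge>M. \<forall>n\<ge>M. dist (f m) (f n) < e" by blast
qed

lemma nearest_point_exists:
  fixes C :: "'a set"
  assumes "complete C" "convex C" "C \<noteq> {}"
  shows "\<exists>p\<in>C. dist y p = infdist y C"
proof -
  have "\<exists>a\<in>C. dist y a < infdist y C + inverse (real (Suc n))" for n
    using cInf_lessD[of "dist y ` C" "infdist y C + inverse (real (Suc n))"] assms(3)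
    by (auto simp: infdist_notempty)
  then obtain f where f: "\<And>n. f n \<in> C"
    and f_close: "\<And>n. dist y (f n) < infdist y C + inverse (real (Suc n))"
    by metis
  have lim: "(\<lambda>n. dist y (f n)) \<longlonglongrightarrow> infdist y C"
  proof (rule tendsto_sandwich)
    show "\<forall>\<^sub>F n in sequentially. infdist y C \<le> dist y (f n)"
      using f by (simp add: infdist_le)
    show "\<forall>\<^sub>F n in sequentially. dist y (f n) \<le> infdist y C + inverse (real (Suc n))"
      using f_close by (simp add: less_imp_le)
    show "(\<lambda>n. infdist y C + inverse (real (Suc n))) \<longlonglongrightarrow> infdist y C"
      using tendsto_add[OF tendsto_const LIMSEQ_inverse_real_of_nat] by simp
  qed simp
  obtain p where p: "p \<in> C" "f \<longlonglongrightarrow> p"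
    using assms(1) Cauchy_if_dist_tendsto_infdist[OF assms(2) f lim] f
    unfolding complete_def by blast
  have "(\<lambda>n. dist y (f n)) \<longlonglongrightarrow> dist y p" by (intro tendsto_intros p)
  then have "dist y p = infdist y C" using lim by (rule LIMSEQ_unique)
  with p show ?thesis by blast
qed

lemma exists_orthogonal_to_subspace:
  assumes M: "subspace M" and complete: "complete (closure M)" and "closure M \<noteq> UNIV"
  shows "\<exists>z. z \<noteq> 0 \<and> (\<forall>m\<in>M. inn m z = 0)"
proof -
  obtain y where y: "y \<notin> closure M" using assms(3) by blast
  have "convex (closure M)" "closure M \<noteq> {}"
    using M closure_subset subspace_0 by (auto simp: convex_closure subspace_imp_convex)
  then obtain p where p: "p \<in> closure M" "dist y p = infdist y (closure M)"
    using nearest_point_exists complete by blast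
  have "inn m (y - p) = 0" if m: "m \<in> M" for m
    \<comment> \<open>p + t m stays in closure M, so t = 0 minimises the norm of (y - p) - t m\<close>
  proof (rule zero_if_linear_le_quadratic[where q = "(norm m)\<^sup>2"])
    fix t :: real
    have "(\<lambda>x. x + t *\<^sub>R m) ` closure M \<subseteq> closure M"
      by (intro image_closure_subset continuous_intros)
        (auto intro!: closure_subset[THEN subsetD] subspace_add subspace_scale M m)
    with p(1) have "dist y p \<le> dist y (p + t *\<^sub>R m)"
      unfolding p(2) by (blast intro: infdist_le)
    then have "(norm (y - p))\<^sup>2 \<le> (norm ((y - p) - t *\<^sub>R m))\<^sup>2"
      by (simp add: dist_norm diff_diff_add)
    then show "2 * t * inn m (y - p) \<le> t\<^sup>2 * (norm m)\<^sup>2"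
      by (simp add: norm_diff_scaleR_sq)
  qed
  moreover have "y - p \<noteq> 0" using p y by auto
  ultimately show ?thesis by blast
qed

lemma adjoint_diff:
  "(a, b) \<in> adjoint R \<Longrightarrow> (c, d) \<in> adjoint R \<Longrightarrow> (a - c, b - d) \<in> adjoint R"
  unfolding adjoint_def by (fastforce simp: inn_diff_right)

lemma zero_in_adjoint_iff: "(0, z) \<in> adjoint R \<longleftrightarrow> (\<forall>m\<in>Domain R. inn m z = 0)"
  by (auto simp: adjoint_def)

lemma kernel_Int_Range_adjoint_eq_0:
  "(w, 0) \<in> R \<Longrightarrow> w \<in> Range (adjoint R) \<Longrightarrow> w = 0"
  by (auto simp: adjoint_def)

lemma adjoint_kernel_eq_0_if_Range_UNIV:
  assumes "Range R = UNIV" "(k, 0) \<in> adjoint R"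
  shows "k = 0"
proof -
  obtain h where "(h, k) \<in> R" using assms(1) by blast
  with assms(2) show ?thesis by (auto simp: adjoint_def)
qed

lemma dense_Domain_if_adjoint_single_valued:
  assumes "complete (UNIV :: 'a set)" "subspace (Domain R)"
    and "\<And>z. (0, z) \<in> adjoint R \<Longrightarrow> z = 0"
  shows "closure (Domain R) = UNIV"
proof (rule ccontr)
  assume "closure (Domain R) \<noteq> UNIV"
  moreover have "complete (closure (Domain R))"
    using complete_closed_subset[OF closed_closure _ assms(1)] by simp
  ultimately obtain z where "z \<noteq> 0" "\<forall>m\<in>Domain R. inn m z = 0"
    using exists_orthogonal_to_subspace assms(2) by blast
  then show False using assms(3)[of z] by (simp add: zero_in_adjoint_iff)
qed

lemma subset_adjoint_if_Range_Int_adjoint_UNIV: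
  assumes S: "real_linear_operator S" and ran: "Range (S \<inter> adjoint S) = UNIV"
  shows "S \<subseteq> adjoint S"
proof clarify
  fix x y
  assume xy: "(x, y) \<in> S"
  from ran obtain u where u: "(u, y) \<in> S" "(u, y) \<in> adjoint S" by blast
  have "(x - u, 0) \<in> S" using real_linear_operator_diff[OF S xy u(1)] by simp
  moreover have "x - u \<in> Range (adjoint S)" using ran by blast
  ultimately have "x - u = 0" by (rule kernel_Int_Range_adjoint_eq_0)
  with u(2) show "(x, y) \<in> adjoint S" by simp
qed

lemma adjoint_subset_if_Range_Int_adjoint_UNIV:
  assumes ran: "Range (S \<inter> adjoint S) = UNIV"
  shows "adjoint S \<subseteq> S"
proof clarify
  fix k h
  assume kh: "(k, h) \<in> adjoint S"
  from ran obtain u where u: "(u, h) \<in> S" "(u, h) \<in> adjoint S" by blast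
  have "Range S = UNIV" using ran by blast
  moreover have "(k - u, 0) \<in> adjoint S" using adjoint_diff[OF kh u(2)] by simp
  ultimately have "k - u = 0" by (rule adjoint_kernel_eq_0_if_Range_UNIV)
  with u(1) show "(k, h) \<in> S" by simp
qed

theorem self_adjoint_if_Range_Int_adjoint_UNIV:
  assumes complete: "complete (UNIV :: 'a set)"
    and S: "real_linear_operator S" and ran: "Range (S \<inter> adjoint S) = UNIV"
  shows "closure (Domain S) = UNIV \<and> adjoint S = S"
proof -
  have self_adjoint: "adjoint S = S"
    using subset_adjoint_if_Range_Int_adjoint_UNIV[OF S ran]
      adjoint_subset_if_Range_Int_adjoint_UNIV[OF ran] by blast
  have "closure (Domain S) = UNIV"
    using complete subspace_Domain[OF S]
  proof (rule dense_Domain_if_adjoint_single_valued)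
    fix z
    assume "(0, z) \<in> adjoint S"
    with S show "z = 0" unfolding self_adjoint real_linear_operator_def by blast
  qed
  with self_adjoint show ?thesis by blast
qed

end

interpretation real_inner: real_inner_product "inner :: 'a::real_inner \<Rightarrow> 'a \<Rightarrow> real"
  by unfold_locales
    (rule inner_commute, rule inner_add_left, rule inner_scaleR_left, rule power2_norm_eq_inner[symmetric])

lemma real_adjoint_eq_adjoint: "real_adjoint = real_inner.adjoint"
  by (simp add: fun_eq_iff real_adjoint_def real_inner.adjoint_def)

interpretation complex_inner: real_inner_product "\<lambda>x y :: 'a::complex_inner_space. Re (cinner x y)"
proof
  fix x y z :: 'a and r :: real
  show "Re (cinner x y) = Re (cinner y x)" by (subst cinner_commute) simp
  show "Re (cinner (x + y) z) = Re (cinner x z) + Re (cinner y z)" by (simp add: cinner_add_left)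
  show "Re (cinner (r *\<^sub>R x) y) = r * Re (cinner x y)"
    by (simp add: scaleR_scaleC cinner_scaleC_left)
  show "Re (cinner x x) = (norm x)\<^sup>2" by (simp add: cinner_self_norm)
qed

lemma real_linear_operator_if_complex:
  "complex_linear_operator S \<Longrightarrow> real_linear_operator S"
  by (simp add: complex_linear_operator_def real_linear_operator_def scaleR_scaleC)

lemma complex_adjoint_eq_adjoint_Re:
  assumes "complex_linear_operator S"
  shows "complex_adjoint S = complex_inner.adjoint S"
proof (intro equalityI subsetI; clarify)
  fix k' h'
  assume "(k', h') \<in> complex_inner.adjoint S"
  then have Re_eq: "Re (cinner k k') = Re (cinner h h')" if "(h, k) \<in> S" for h k
    using that by (auto simp: complex_inner.adjoint_def)
  have "cinner k k' = cinner h h'" if hk: "(h, k) \<in> S" for h k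
  proof (rule complex_eqI)
    show "Re (cinner k k') = Re (cinner h h')" using Re_eq[OF hk] .
    have "(scaleC \<i> h, scaleC \<i> k) \<in> S"
      using assms hk by (simp add: complex_linear_operator_def)
    from Re_eq[OF this] show "Im (cinner k k') = Im (cinner h h')"
      by (simp add: cinner_scaleC_left)
  qed
  then show "(k', h') \<in> complex_adjoint S" by (auto simp: complex_adjoint_def)
qed (auto simp: complex_adjoint_def complex_inner.adjoint_def)

theorem corollary3p6:
  shows "(\<forall>S :: ('a::{real_inner, complete_space} \<times> 'a) set.
            real_linear_operator S \<and> Range (S \<inter> real_adjoint S) = UNIV
            \<longrightarrow> closure (Domain S) = UNIV \<and> real_adjoint S = S)
       \<and> (\<forall>S :: ('b::{complex_inner_space, complete_space} \<times> 'b) set.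
            complex_linear_operator S \<and> Range (S \<inter> complex_adjoint S) = UNIV
            \<longrightarrow> closure (Domain S) = UNIV \<and> complex_adjoint S = S)"
proof (rule conjI; intro allI impI; elim conjE)
  fix S :: "('a \<times> 'a) set"
  assume "real_linear_operator S" "Range (S \<inter> real_adjoint S) = UNIV"
  then show "closure (Domain S) = UNIV \<and> real_adjoint S = S"
    unfolding real_adjoint_eq_adjoint
    by (rule real_inner.self_adjoint_if_Range_Int_adjoint_UNIV[OF complete_UNIV])
next
  fix S :: "('b \<times> 'b) set"
  assume "complex_linear_operator S" "Range (S \<inter> complex_adjoint S) = UNIV"
  then show "closure (Domain S) = UNIV \<and> complex_adjoint S = S"
    unfolding complex_adjoint_eq_adjoint_Re[OF \<open>complex_linear_operator S\<close>]
    by (intro complex_inner.self_adjoint_if_Range_Int_adjoint_UNIV[OF complete_UNIV]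
        real_linear_operator_if_complex)
qed

end
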